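(* Let $\beta,\gamma\in\mathcal S_n$, where $\beta$ is a single $n$-cycle. Then $(\varepsilon,\beta,\gamma;(12))\in\mathrm{Par}(n)$ if and only if both of the following hold: <ul> <li>(i) the length of each cycle of $\gamma$ divides $2n$;</li> <li>(ii) at most one cycle of $\gamma$ has odd length.</li> </ul> Fixed points count as cycles of length $1$.
   Context: A Latin square of order $n$ is an $n\times n$ array with rows, columns and symbols indexed by $[n]$, each symbol occurring once in each row and each column, with triple set $O(L)$. Permutations act on the right; $\varepsilon$ is the identity. A paratopism $(\alpha,\beta,\gamma;(12))$ maps $L$ to $L^\sigma$ with triple set $\{(y\beta,x\alpha,z\gamma):(x,y,z)\in O(L)\}$; it is an autoparatopism of $L$ if $L^\sigma=L$. $\mathrm{Par}(n)$ is the set of paratopisms that are autoparatopisms of at least one Latin square of order $n$. *)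

theory Defs
  imports "HOL-Combinatorics.Combinatorics"
begin

text \<open>Rows, columns and symbols are indexed by [n] = {0..<n}.
A Latin square of order n is given by its triple set O(L).\<close>

definition latin_square :: "nat \<Rightarrow> (nat \<times> nat \<times> nat) set \<Rightarrow> bool" where
  "latin_square n L \<longleftrightarrow>
     L \<subseteq> {0..<n} \<times> {0..<n} \<times> {0..<n} \<and>
     (\<forall>x<n. \<forall>y<n. \<exists>!z. (x, y, z) \<in> L) \<and>
     (\<forall>x<n. \<forall>z<n. \<exists>!y. (x, y, z) \<in> L) \<and>
     (\<forall>y<n. \<forall>z<n. \<exists>!x. (x, y, z) \<in> L)"

text \<open>Image of the triple set under the paratopism (alpha, beta, gamma; (12)):
 {(y beta, x alpha, z gamma) : (x,y,z) in O(L)}; permutations act on the right,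
 so x alpha is written alpha x.\<close>

definition paratopism12_image ::
  "(nat \<Rightarrow> nat) \<Rightarrow> (nat \<Rightarrow> nat) \<Rightarrow> (nat \<Rightarrow> nat) \<Rightarrow> (nat \<times> nat \<times> nat) set \<Rightarrow> (nat \<times> nat \<times> nat) set" where
  "paratopism12_image \<alpha> \<beta> \<gamma> L = (\<lambda>(x, y, z). (\<beta> y, \<alpha> x, \<gamma> z)) ` L"

definition in_Par12 :: "nat \<Rightarrow> (nat \<Rightarrow> nat) \<Rightarrow> (nat \<Rightarrow> nat) \<Rightarrow> (nat \<Rightarrow> nat) \<Rightarrow> bool" where
  "in_Par12 n \<alpha> \<beta> \<gamma> \<longleftrightarrow>
     (\<exists>L. latin_square n L \<and> paratopism12_image \<alpha> \<beta> \<gamma> L = L)"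

end

theory Submission
  imports Defs
begin

text \<open>Index rows and columns by \<open>point i = \<beta>\<^sup>i 0\<close>. The autoparatopism condition reads
\<open>L(\<beta> y, x) = \<gamma> L(x, y)\<close>; applied twice it moves a cell one step along the diagonal at the
cost of \<open>\<gamma>\<^sup>2\<close>. So an autoparatopic square is determined by its first row \<open>f\<close>, the
permutation \<open>\<gamma>\<^sup>2\<^sup>n\<close> fixes every symbol, and \<open>f d = \<gamma>\<^sup>2\<^sup>d\<^sup>+\<^sup>1 f (n - 1 - d)\<close>; conversely
such a bijection \<open>f\<close> gives an autoparatopic square with entry \<open>\<gamma>\<^sup>2\<^sup>i f d\<close> in cell
\<open>(point i, point (i + d))\<close>. Now \<open>\<gamma>\<^sup>2\<^sup>n = id\<close> is condition (i), and under \<open>f\<close> the positions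
of a cycle of \<open>\<gamma>\<close> are closed under the involution \<open>d \<mapsto> n - 1 - d\<close>, whose only possible
fixed point is the centre: hence (ii). Conversely, an even cycle of length \<open>2a\<close> can be spread over \<open>a\<close>
positions and their mirror images, and the odd cycle, whose length then divides \<open>n\<close>, over
the central positions.\<close>

section \<open>Orbits of permutations\<close>

lemma orbit_eq_funpow_image:
  assumes "permutation p"
  shows "orbit p a = (\<lambda>k. (p ^^ k) a) ` {0..<least_power p a}"
  using orbit_altdef_permutation[OF assms] support_set[OF assms] by auto

lemma inj_on_funpow_least_power:
  assumes "permutation p"
  shows "inj_on (\<lambda>k. (p ^^ k) a) {0..<least_power p a}"
  using cycle_of_permutation[OF assms] by (simp add: distinct_map)

lemma card_orbit_eq_least_power:
  assumes "permutation p"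
  shows "card (orbit p a) = least_power p a"
  using orbit_eq_funpow_image[OF assms] inj_on_funpow_least_power[OF assms]
  by (simp add: card_image)

lemma funpow_eq_self_iff_card_orbit_dvd:
  assumes "permutation p"
  shows "(p ^^ m) a = a \<longleftrightarrow> card (orbit p a) dvd m"
  using least_power_dvd[OF assms] card_orbit_eq_least_power[OF assms] by simp

lemma funpow_cong_mod:
  assumes "(p ^^ m) z = z" "a mod m = b mod m"
  shows "(p ^^ a) z = (p ^^ b) z"
  by (metis assms funpow_mod_eq)

lemma bij_betw_funpow_orbit:
  assumes "permutation p"
  shows "bij_betw (\<lambda>k. (p ^^ k) a) {0..<card (orbit p a)} (orbit p a)"
  unfolding card_orbit_eq_least_power[OF assms] bij_betw_def
  using orbit_eq_funpow_image[OF assms] inj_on_funpow_least_power[OF assms] by simp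

lemma orbit_eq_if_mem:
  assumes "p permutes S" "finite S" "b \<in> orbit p a"
  shows "orbit p b = orbit p a"
  using orbit_cyclic_eq3[OF cyclic_on_orbit[OF assms(1,2)] assms(3)] .

lemma card_orbit_pos:
  assumes "permutation p"
  shows "0 < card (orbit p a)"
  using finite_orbit[OF permutation_self_in_orbit[OF assms]] orbit_nonempty[of p a]
  by (simp add: card_gt_0_iff)

lemma orbit_subset_Diff_orbit:
  assumes "p permutes A" "finite A" "\<And>z. z \<in> S \<Longrightarrow> orbit p z \<subseteq> S" "z \<in> S - orbit p r"
  shows "orbit p z \<subseteq> S - orbit p r"
proof
  fix w assume w: "w \<in> orbit p z"
  have "w \<notin> orbit p r"
  proof
    assume "w \<in> orbit p r"
    then have "orbit p z = orbit p r"
      using orbit_eq_if_mem[OF assms(1,2)] w by metis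
    then show False
      using assms(4) permutation_self_in_orbit[of p z] assms(1,2) permutation_permutes by blast
  qed
  then show "w \<in> S - orbit p r"
    using assms(3,4) w by blast
qed

lemma orbit_subset_orbit_Collect:
  fixes n :: nat
  assumes "p permutes {0..<n}" "z < n" "P (orbit p z)"
  shows "orbit p z \<subseteq> {w \<in> {0..<n}. P (orbit p w)}"
proof
  fix w assume w: "w \<in> orbit p z"
  then have "w < n"
    using permutes_orbit_subset[OF assms(1), of z] assms(2) by auto
  moreover have "orbit p w = orbit p z"
    using orbit_eq_if_mem[OF assms(1) _ w] by simp
  ultimately show "w \<in> {w \<in> {0..<n}. P (orbit p w)}"
    using assms(3) by simp
qed

lemma odd_card_involution_has_fixpoint:
  assumes "finite A" "odd (card A)" "\<And>a. a \<in> A \<Longrightarrow> g a \<in> A" "\<And>a. a \<in> A \<Longrightarrow> g (g a) = a"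
  shows "\<exists>a\<in>A. g a = a"
  using assms
proof (induction "card A" arbitrary: A rule: less_induct)
  case less
  have "A \<noteq> {}"
    using less.prems(2) by auto
  then obtain a where a: "a \<in> A"
    by blast
  show ?case
  proof (cases "g a = a")
    case True
    with a show ?thesis by blast
  next
    case False
    define A' where "A' = A - {a, g a}"
    have pair: "{a, g a} \<subseteq> A" "card {a, g a} = 2"
      using a False less.prems(3) by auto
    have "card A' = card A - 2"
      unfolding A'_def using card_Diff_subset[OF _ pair(1)] pair(2) by simp
    moreover have "2 \<le> card A"
      using card_mono[OF less.prems(1) pair(1)] pair(2) by simp
    ultimately have card_A: "card A = card A' + 2"
      by simp
    then have "card A' < card A" "odd (card A')"
      using less.prems(2) by simp_all
    moreover have "g b \<in> A'" if b: "b \<in> A'" for b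
    proof -
      have "b \<in> A" "b \<noteq> a" "b \<noteq> g a"
        using b unfolding A'_def by auto
      then have "g b \<in> A" "g b \<noteq> a" "g b \<noteq> g a"
        using less.prems(3,4) a by metis+
      then show ?thesis
        unfolding A'_def by simp
    qed
    moreover have "finite A'"
      using less.prems(1) unfolding A'_def by simp
    ultimately have "\<exists>b\<in>A'. g b = b"
      using less.hyps[of A'] less.prems(4) unfolding A'_def by blast
    then show ?thesis
      unfolding A'_def by blast
  qed
qed

section \<open>Latin squares\<close>

definition latin_entry :: "(nat \<times> nat \<times> nat) set \<Rightarrow> nat \<Rightarrow> nat \<Rightarrow> nat" where
  "latin_entry L x y = (THE z. (x, y, z) \<in> L)"

lemma latin_entry_eqI:
  assumes "(x, y, z) \<in> L" "\<And>z'. (x, y, z') \<in> L \<Longrightarrow> z' = z"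
  shows "latin_entry L x y = z"
  unfolding latin_entry_def using assms by (rule the_equality)

context
  fixes n L
  assumes L: "latin_square n L"
begin

lemma latin_square_mem_less: "(x, y, z) \<in> L \<Longrightarrow> x < n \<and> y < n \<and> z < n"
  using L unfolding latin_square_def by auto

lemma latin_entry_eq: "(x, y, z) \<in> L \<Longrightarrow> latin_entry L x y = z"
  using L latin_square_mem_less unfolding latin_square_def by (metis latin_entry_eqI)

lemma latin_entry_mem: "x < n \<Longrightarrow> y < n \<Longrightarrow> (x, y, latin_entry L x y) \<in> L"
  using L latin_entry_eq unfolding latin_square_def by metis

lemma bij_betw_latin_entry_row:
  assumes "x < n"
  shows "bij_betw (latin_entry L x) {0..<n} {0..<n}"
proof (rule bij_betw_imageI)
  show "inj_on (latin_entry L x) {0..<n}"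
  proof (rule inj_onI)
    fix y y' assume y: "y \<in> {0..<n}" "y' \<in> {0..<n}"
      and eq: "latin_entry L x y = latin_entry L x y'"
    have "(x, y, latin_entry L x y) \<in> L" "(x, y', latin_entry L x y) \<in> L"
      using latin_entry_mem[OF assms, of y] latin_entry_mem[OF assms, of y'] y eq by auto
    with assms L show "y = y'"
      unfolding latin_square_def by (metis latin_square_mem_less)
  qed
  show "latin_entry L x ` {0..<n} = {0..<n}"
  proof
    show "latin_entry L x ` {0..<n} \<subseteq> {0..<n}"
      using latin_square_mem_less[OF latin_entry_mem[OF assms]] by auto
    show "{0..<n} \<subseteq> latin_entry L x ` {0..<n}"
    proof
      fix z assume "z \<in> {0..<n}"
      then have "\<exists>!y. (x, y, z) \<in> L"
        using L assms unfolding latin_square_def by simp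
      then obtain y where "(x, y, z) \<in> L"
        by blast
      then show "z \<in> latin_entry L x ` {0..<n}"
        using latin_entry_eq latin_square_mem_less by force
    qed
  qed
qed

end

lemma latin_entry_autoparatopism:
  assumes L: "latin_square n L" and auto: "paratopism12_image \<alpha> \<beta> \<gamma> L = L"
    and "x < n" "y < n"
  shows "latin_entry L (\<beta> y) (\<alpha> x) = \<gamma> (latin_entry L x y)"
proof -
  have "(\<beta> y, \<alpha> x, \<gamma> (latin_entry L x y)) \<in> paratopism12_image \<alpha> \<beta> \<gamma> L"
    unfolding paratopism12_image_def using latin_entry_mem[OF L assms(3,4)] by force
  then show ?thesis
    using latin_entry_eq[OF L] auto by simp
qed

text \<open>The existence parts of the definition follow from the cancellation laws by counting.\<close>

lemma latin_squareI:
  assumes sub: "L \<subseteq> {0..<n} \<times> {0..<n} \<times> {0..<n}"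
    and total: "\<And>x y. x < n \<Longrightarrow> y < n \<Longrightarrow> \<exists>z. (x, y, z) \<in> L"
    and cancel_z: "\<And>x y z z'. (x, y, z) \<in> L \<Longrightarrow> (x, y, z') \<in> L \<Longrightarrow> z = z'"
    and cancel_y: "\<And>x y y' z. (x, y, z) \<in> L \<Longrightarrow> (x, y', z) \<in> L \<Longrightarrow> y = y'"
    and cancel_x: "\<And>x x' y z. (x, y, z) \<in> L \<Longrightarrow> (x', y, z) \<in> L \<Longrightarrow> x = x'"
  shows "latin_square n L"
proof -
  have mem: "(x, y, latin_entry L x y) \<in> L" if "x < n" "y < n" for x y
    using total[OF that] cancel_z latin_entry_eqI by metis
  have less: "latin_entry L x y < n" if "x < n" "y < n" for x y
    using mem[OF that] sub by auto
  have row: "latin_entry L x ` {0..<n} = {0..<n}" if "x < n" for x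
  proof (rule endo_inj_surj)
    show "inj_on (latin_entry L x) {0..<n}"
      by (rule inj_onI) (metis atLeastLessThan_iff cancel_y mem that)
  qed (use less that in auto)
  have col: "(\<lambda>x. latin_entry L x y) ` {0..<n} = {0..<n}" if "y < n" for y
  proof (rule endo_inj_surj)
    show "inj_on (\<lambda>x. latin_entry L x y) {0..<n}"
      by (rule inj_onI) (metis atLeastLessThan_iff cancel_x mem that)
  qed (use less that in auto)
  show ?thesis
    unfolding latin_square_def
  proof (intro conjI allI impI sub)
    show "\<exists>!z. (x, y, z) \<in> L" if "x < n" "y < n" for x y
      using mem[OF that] cancel_z by blast
    show "\<exists>!y. (x, y, z) \<in> L" if "x < n" "z < n" for x z
    proof -
      obtain y where "y < n" "latin_entry L x y = z"
        using row[OF \<open>x < n\<close>] \<open>z < n\<close> by (metis atLeastLessThan_iff imageE zero_le)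
      then show ?thesis
        using mem \<open>x < n\<close> cancel_y by metis
    qed
    show "\<exists>!x. (x, y, z) \<in> L" if "y < n" "z < n" for y z
    proof -
      obtain x where "x < n" "latin_entry L x y = z"
        using col[OF \<open>y < n\<close>] \<open>z < n\<close> by (metis atLeastLessThan_iff imageE zero_le)
      then show ?thesis
        using mem \<open>y < n\<close> cancel_x by metis
    qed
  qed
qed

section \<open>Squares indexed along an \<open>n\<close>-cycle\<close>

text \<open>\<open>f d\<close> stands for the entry of an autoparatopic square in row \<open>0\<close> and column \<open>\<beta>\<^sup>d 0\<close>.\<close>

definition mirrors :: "nat \<Rightarrow> (nat \<Rightarrow> nat) \<Rightarrow> (nat \<Rightarrow> nat) \<Rightarrow> nat set \<Rightarrow> bool" where
  "mirrors n \<gamma> f D \<longleftrightarrow> (\<forall>d\<in>D. (\<gamma> ^^ (2 * d + 1)) (f (n - 1 - d)) = f d)"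

definition has_mirror_bij :: "nat \<Rightarrow> (nat \<Rightarrow> nat) \<Rightarrow> nat set \<Rightarrow> nat set \<Rightarrow> bool" where
  "has_mirror_bij n \<gamma> D S \<longleftrightarrow> (\<exists>f. bij_betw f D S \<and> mirrors n \<gamma> f D)"

locale n_cycle =
  fixes n :: nat and \<beta> :: "nat \<Rightarrow> nat"
  assumes permutes: "\<beta> permutes {0..<n}" and cyclic: "cyclic_on \<beta> {0..<n}"
begin

definition point :: "nat \<Rightarrow> nat" where
  "point i = (\<beta> ^^ i) 0"

lemma n_pos: "0 < n"
  using cyclic unfolding cyclic_on_alldef by auto

lemma orbit_zero: "orbit \<beta> 0 = {0..<n}"
  using cyclic n_pos unfolding cyclic_on_alldef by auto

lemma permutation_beta: "permutation \<beta>"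
  using permutes permutation_permutes by blast

lemma point_less: "point i < n"
  using cyclic_on_funpow_in[OF cyclic, of 0 i] n_pos unfolding point_def by auto

lemma point_Suc: "point (Suc i) = \<beta> (point i)"
  unfolding point_def by simp

lemma point_add: "point (i + j) = (\<beta> ^^ i) (point j)"
  unfolding point_def by (simp add: funpow_add)

lemma point_mod: "point (i mod n) = point i"
proof -
  have "(\<beta> ^^ n) 0 = 0"
    using funpow_eq_self_iff_card_orbit_dvd[OF permutation_beta] orbit_zero by simp
  then show ?thesis
    unfolding point_def by (rule funpow_mod_eq)
qed

lemma bij_betw_point: "bij_betw point {0..<n} {0..<n}"
  using bij_betw_funpow_orbit[OF permutation_beta, of 0] orbit_zero unfolding point_def by simp

lemma point_surj:
  assumes "x < n"
  shows "\<exists>i<n. point i = x"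
proof -
  have "x \<in> point ` {0..<n}"
    using bij_betw_imp_surj_on[OF bij_betw_point] assms by simp
  then show ?thesis
    by auto
qed

lemma point_eq_iff: "point i = point j \<longleftrightarrow> i mod n = j mod n"
proof
  assume "point i = point j"
  then have "point (i mod n) = point (j mod n)"
    by (simp add: point_mod)
  then show "i mod n = j mod n"
    using bij_betw_point n_pos unfolding bij_betw_def inj_on_def by simp
qed (metis point_mod)

lemma point_inj: "point i = point j \<Longrightarrow> i < n \<Longrightarrow> j < n \<Longrightarrow> i = j"
  by (simp add: point_eq_iff)

lemma point_shift_inj: "point (i + d) = point (i + d') \<Longrightarrow> d < n \<Longrightarrow> d' < n \<Longrightarrow> d = d'"
  using permutes_inj[OF permutes_funpow[OF permutes]] point_inj
  by (metis injD point_add)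

context
  fixes \<gamma> L
  assumes \<gamma>: "\<gamma> permutes {0..<n}" and L: "latin_square n L"
    and auto: "paratopism12_image id \<beta> \<gamma> L = L"
begin

lemma latin_entry_point_Suc:
  "latin_entry L (point (Suc j)) (point i) = \<gamma> (latin_entry L (point i) (point j))"
  using latin_entry_autoparatopism[OF L auto point_less point_less] by (simp add: point_Suc)

lemma latin_entry_point_shift:
  "latin_entry L (point (i + t)) (point (j + t)) = (\<gamma> ^^ (2 * t)) (latin_entry L (point i) (point j))"
proof (induction t)
  case (Suc t)
  have "latin_entry L (point (i + Suc t)) (point (j + Suc t))
      = \<gamma> (\<gamma> (latin_entry L (point (i + t)) (point (j + t))))"
    using latin_entry_point_Suc[of "i + t" "Suc (j + t)"] latin_entry_point_Suc[of "j + t" "i + t"]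
    by simp
  with Suc show ?case
    by simp
qed simp

lemma bij_betw_first_row: "bij_betw (\<lambda>d. latin_entry L 0 (point d)) {0..<n} {0..<n}"
  using bij_betw_trans[OF bij_betw_point bij_betw_latin_entry_row[OF L n_pos]]
  by (simp add: comp_def)

lemma funpow_2n_fixes: "z < n \<Longrightarrow> (\<gamma> ^^ (2 * n)) z = z"
proof -
  assume "z < n"
  then have "z \<in> (\<lambda>d. latin_entry L 0 (point d)) ` {0..<n}"
    using bij_betw_imp_surj_on[OF bij_betw_first_row] by simp
  then obtain j where "z = latin_entry L 0 (point j)"
    by blast
  moreover have "point (j + n) = point j" "point n = 0"
    using point_mod[of "j + n"] point_mod[of j] point_mod[of n] by (simp_all add: point_def)
  ultimately show "(\<gamma> ^^ (2 * n)) z = z"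
    using latin_entry_point_shift[of 0 n j] by (simp add: point_def)
qed

lemma mirrors_first_row: "mirrors n \<gamma> (\<lambda>d. latin_entry L 0 (point d)) {0..<n}"
  unfolding mirrors_def
proof
  fix d assume "d \<in> {0..<n}"
  then have "point (n - 1 - d + Suc d) = point 0"
    using point_mod[of n] by (simp add: point_def)
  then have "\<gamma> (latin_entry L 0 (point d))
      = latin_entry L (point (0 + Suc d)) (point (n - 1 - d + Suc d))"
    using latin_entry_point_Suc[of d 0] by (simp add: point_def)
  also have "\<dots> = \<gamma> ((\<gamma> ^^ (2 * d + 1)) (latin_entry L 0 (point (n - 1 - d))))"
    using latin_entry_point_shift[of 0 "Suc d" "n - 1 - d"] by (simp add: point_def)
  finally show "(\<gamma> ^^ (2 * d + 1)) (latin_entry L 0 (point (n - 1 - d))) = latin_entry L 0 (point d)"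
    using permutes_inj[OF \<gamma>] by (simp add: inj_eq)
qed

end

definition mirror_square :: "(nat \<Rightarrow> nat) \<Rightarrow> (nat \<Rightarrow> nat) \<Rightarrow> (nat \<times> nat \<times> nat) set" where
  "mirror_square \<gamma> f =
     (\<lambda>(i, d). (point i, point (i + d), (\<gamma> ^^ (2 * i)) (f d))) ` ({0..<n} \<times> {0..<n})"

context
  fixes \<gamma> f
  assumes \<gamma>: "\<gamma> permutes {0..<n}" and \<gamma>_2n: "\<And>z. z < n \<Longrightarrow> (\<gamma> ^^ (2 * n)) z = z"
    and f: "bij_betw f {0..<n} {0..<n}" and mirror: "mirrors n \<gamma> f {0..<n}"
begin

lemma f_less: "d < n \<Longrightarrow> f d < n"
  using f bij_betwE by fastforce

lemma f_inj: "f d = f d' \<Longrightarrow> d < n \<Longrightarrow> d' < n \<Longrightarrow> d = d'"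
  using f unfolding bij_betw_def inj_on_def by simp

lemma funpow_eq_iff: "(\<gamma> ^^ k) x = (\<gamma> ^^ k) y \<longleftrightarrow> x = y"
  using inj_eq[OF permutes_inj[OF permutes_funpow[OF \<gamma>]]] .

lemma funpow_less: "z < n \<Longrightarrow> (\<gamma> ^^ k) z < n"
  using permutes_in_image[OF permutes_funpow[OF \<gamma>]] by simp

lemma funpow_cong_mod_n:
  assumes "z < n" "i mod n = j mod n"
  shows "(\<gamma> ^^ (2 * i + c)) z = (\<gamma> ^^ (2 * j + c)) z"
proof (rule funpow_cong_mod[OF \<gamma>_2n[OF assms(1)]])
  have "(2 * i) mod (2 * n) = (2 * j) mod (2 * n)"
    using assms(2) by (simp add: mod_mult_mult1)
  then show "(2 * i + c) mod (2 * n) = (2 * j + c) mod (2 * n)"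
    by (metis mod_add_left_eq)
qed

lemma mem_mirror_square:
  assumes "d < n"
  shows "(point i, point (i + d), (\<gamma> ^^ (2 * i)) (f d)) \<in> mirror_square \<gamma> f"
proof -
  have "point (i mod n) = point i" "point (i mod n + d) = point (i + d)"
    using point_mod by (metis mod_add_left_eq)+
  moreover have "(\<gamma> ^^ (2 * (i mod n))) (f d) = (\<gamma> ^^ (2 * i)) (f d)"
    using funpow_cong_mod_n[OF f_less[OF assms], of "i mod n" i 0] by simp
  ultimately show ?thesis
    unfolding mirror_square_def using assms n_pos
    by (force intro!: image_eqI[of _ _ "(i mod n, d)"])
qed

lemma mirror_square_column:
  assumes "d < n"
  shows "(\<gamma> ^^ (2 * i)) (f d) = (\<gamma> ^^ (2 * (i + d) + 1)) (f (n - 1 - d))"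
proof -
  have "2 * (i + d) + 1 = 2 * i + (2 * d + 1)"
    by simp
  then show ?thesis
    using mirror assms unfolding mirrors_def by (simp only: funpow_add o_apply) simp
qed

lemma mirror_square_memE:
  assumes "t \<in> mirror_square \<gamma> f"
  obtains i d where "i < n" "d < n" "t = (point i, point (i + d), (\<gamma> ^^ (2 * i)) (f d))"
  using assms unfolding mirror_square_def by auto

lemma mirror_square_subset: "mirror_square \<gamma> f \<subseteq> {0..<n} \<times> {0..<n} \<times> {0..<n}"
  by (auto elim!: mirror_square_memE simp: point_less f_less funpow_less)

lemma mirror_square_total:
  assumes "x < n" "y < n"
  shows "\<exists>z. (x, y, z) \<in> mirror_square \<gamma> f"
proof -
  obtain i j where ij: "i < n" "j < n" "x = point i" "y = point j"
    using point_surj assms by metis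
  define d where "d = (j + n - i) mod n"
  have "point (i + d) = point ((i + (j + n - i)) mod n)"
    unfolding d_def by (metis mod_add_right_eq point_mod)
  also have "i + (j + n - i) = j + n"
    using ij(1) by simp
  finally have "point (i + d) = point j"
    by (simp add: point_mod)
  then show ?thesis
    using mem_mirror_square[of d i] n_pos ij unfolding d_def by auto
qed

lemma mirror_square_entry_unique:
  assumes "(x, y, z) \<in> mirror_square \<gamma> f" "(x, y, z') \<in> mirror_square \<gamma> f"
  shows "z = z'"
proof -
  obtain i d i' d' where id: "i < n" "d < n" "i' < n" "d' < n"
      "point i = point i'" "point (i + d) = point (i' + d')"
      "z = (\<gamma> ^^ (2 * i)) (f d)" "z' = (\<gamma> ^^ (2 * i')) (f d')"
    using assms by (elim mirror_square_memE) simp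
  then have "i = i'"
    by (simp add: point_inj)
  with id have "d = d'"
    by (simp add: point_shift_inj)
  with \<open>i = i'\<close> id show "z = z'"
    by simp
qed

lemma mirror_square_column_unique:
  assumes "(x, y, z) \<in> mirror_square \<gamma> f" "(x, y', z) \<in> mirror_square \<gamma> f"
  shows "y = y'"
proof -
  obtain i d i' d' where id: "i < n" "d < n" "i' < n" "d' < n" "point i = point i'"
      "y = point (i + d)" "y' = point (i' + d')"
      "(\<gamma> ^^ (2 * i)) (f d) = (\<gamma> ^^ (2 * i')) (f d')"
    using assms by (elim mirror_square_memE) simp
  then have "i = i'"
    by (simp add: point_inj)
  with id have "f d = f d'"
    by (simp add: funpow_eq_iff)
  with id have "d = d'"
    by (simp add: f_inj)
  with \<open>i = i'\<close> id show "y = y'"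
    by simp
qed

lemma mirror_square_row_unique:
  assumes "(x, y, z) \<in> mirror_square \<gamma> f" "(x', y, z) \<in> mirror_square \<gamma> f"
  shows "x = x'"
proof -
  obtain i d i' d' where id: "i < n" "d < n" "i' < n" "d' < n"
      "x = point i" "x' = point i'" "point (i + d) = point (i' + d')"
      "(\<gamma> ^^ (2 * i)) (f d) = (\<gamma> ^^ (2 * i')) (f d')"
    using assms by (elim mirror_square_memE) simp
  have "(\<gamma> ^^ (2 * (i' + d') + 1)) (f (n - 1 - d)) = (\<gamma> ^^ (2 * (i + d) + 1)) (f (n - 1 - d))"
    using funpow_cong_mod_n[OF f_less, of "n - 1 - d" "i' + d'" "i + d" 1] id(7) n_pos
    by (simp add: point_eq_iff)
  also have "\<dots> = (\<gamma> ^^ (2 * (i' + d') + 1)) (f (n - 1 - d'))"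
    using id(8) mirror_square_column[OF id(2), of i] mirror_square_column[OF id(4), of i'] by simp
  finally have "f (n - 1 - d) = f (n - 1 - d')"
    unfolding funpow_eq_iff .
  then have "n - 1 - d = n - 1 - d'"
    by (rule f_inj) (use id in auto)
  then have "d = d'"
    using id(2,4) by simp
  then have "point (d + i) = point (d + i')"
    using id(7) by (simp add: add.commute)
  then have "i = i'"
    using id(1,3) by (rule point_shift_inj)
  then show "x = x'"
    using id(5,6) by simp
qed

lemma latin_mirror_square: "latin_square n (mirror_square \<gamma> f)"
  by (rule latin_squareI[OF mirror_square_subset mirror_square_total mirror_square_entry_unique
        mirror_square_column_unique mirror_square_row_unique])

lemma mirror_square_autoparatopic:
  "paratopism12_image id \<beta> \<gamma> (mirror_square \<gamma> f) = mirror_square \<gamma> f"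
proof -
  let ?h = "\<lambda>(x, y, z). (\<beta> y, id x, \<gamma> z)"
  have "?h ` mirror_square \<gamma> f \<subseteq> mirror_square \<gamma> f"
  proof
    fix t assume "t \<in> ?h ` mirror_square \<gamma> f"
    then obtain i d where id: "i < n" "d < n"
      "t = (\<beta> (point (i + d)), point i, \<gamma> ((\<gamma> ^^ (2 * i)) (f d)))"
      by (auto elim!: mirror_square_memE)
    have "\<beta> (point (i + d)) = point (Suc (i + d))"
      by (simp add: point_Suc)
    moreover have "point i = point (Suc (i + d) + (n - 1 - d))"
      using id(2) point_mod[of "i + n"] point_mod[of i] by simp
    moreover have "\<gamma> ((\<gamma> ^^ (2 * i)) (f d)) = (\<gamma> ^^ (2 * Suc (i + d))) (f (n - 1 - d))"
      using mirror_square_column[OF id(2), of i] by simp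
    ultimately show "t \<in> mirror_square \<gamma> f"
      using mem_mirror_square[of "n - 1 - d" "Suc (i + d)"] id n_pos by simp
  qed
  moreover have "inj_on ?h (mirror_square \<gamma> f)"
  proof (rule inj_onI)
    fix a b assume "?h a = ?h b"
    then show "a = b"
      by (cases a; cases b)
        (simp add: inj_eq[OF permutes_inj[OF permutes]] inj_eq[OF permutes_inj[OF \<gamma>]])
  qed
  moreover have "finite (mirror_square \<gamma> f)"
    unfolding mirror_square_def by simp
  ultimately show ?thesis
    unfolding paratopism12_image_def by (rule endo_inj_surj[rotated])
qed

lemma in_Par12_mirror_square: "in_Par12 n id \<beta> \<gamma>"
  unfolding in_Par12_def using latin_mirror_square mirror_square_autoparatopic by blast

end

lemma in_Par12_iff_mirror_bij:
  assumes "\<gamma> permutes {0..<n}"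
  shows "in_Par12 n id \<beta> \<gamma> \<longleftrightarrow>
    (\<forall>z<n. (\<gamma> ^^ (2 * n)) z = z) \<and> has_mirror_bij n \<gamma> {0..<n} {0..<n}"
  unfolding has_mirror_bij_def
proof
  assume "in_Par12 n id \<beta> \<gamma>"
  then obtain L where "latin_square n L" "paratopism12_image id \<beta> \<gamma> L = L"
    unfolding in_Par12_def by blast
  then show "(\<forall>z<n. (\<gamma> ^^ (2 * n)) z = z) \<and> (\<exists>f. bij_betw f {0..<n} {0..<n} \<and> mirrors n \<gamma> f {0..<n})"
    using funpow_2n_fixes[OF assms] bij_betw_first_row[OF assms] mirrors_first_row[OF assms]
    by blast
qed (use in_Par12_mirror_square[OF assms] in blast)

end


section \<open>Mirror bijections and the cycle type of \<open>\<gamma>\<close>\<close>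

lemma bij_betw_mod_window:
  fixes a s :: nat
  assumes "0 < a"
  shows "bij_betw (\<lambda>j. j mod a) {s..<s + a} {0..<a}"
proof -
  have eq: "j = j'" if "j \<le> j'" "j' < s + a" "s \<le> j" "j mod a = j' mod a" for j j'
  proof -
    have "a dvd j' - j"
      using that(1,4) mod_eq_dvd_iff_nat[of j j' a] by simp
    moreover have "j' - j < a"
      using that by simp
    ultimately show ?thesis
      using that(1) nat_dvd_not_less[of "j' - j" a] by linarith
  qed
  have "inj_on (\<lambda>j. j mod a) {s..<s + a}"
    by (rule inj_onI) (metis atLeastLessThan_iff eq nle_le)
  moreover have "(\<lambda>j. j mod a) ` {s..<s + a} \<subseteq> {0..<a}"
    using assms by auto
  ultimately show ?thesis
    unfolding bij_betw_def by (simp add: card_image card_subset_eq)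
qed

text \<open>How an even cycle of length \<open>2 * a\<close> is spread over the low positions \<open>{s..<s + a}\<close>
and their mirror images: the low positions receive the exponents below \<open>a\<close>, the high
ones the exponents from \<open>a\<close> to \<open>2 * a - 1\<close>.\<close>

lemma bij_betw_block_exponent:
  fixes a s n :: nat
  assumes "0 < a" "2 * (s + a) \<le> n"
  shows "bij_betw (\<lambda>j. if j < s + a then j mod a else 2 * a - 1 - (n - 1 - j) mod a)
    ({s..<s + a} \<union> {n - (s + a)..<n - s}) {0..<2 * a}"
proof -
  let ?\<psi> = "\<lambda>j. if j < s + a then j mod a else 2 * a - 1 - (n - 1 - j) mod a"
  have low: "bij_betw ?\<psi> {s..<s + a} {0..<a}"
    using bij_betw_mod_window[OF assms(1), of s] by (rule bij_betw_cong[THEN iffD1, rotated]) simp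
  have reflect: "bij_betw (\<lambda>e. n - 1 - e) {n - (s + a)..<n - s} {s..<s + a}"
    by (rule bij_betw_byWitness[where f' = "\<lambda>j. n - 1 - j"]) (use assms in auto)
  have flip: "bij_betw (\<lambda>k. 2 * a - 1 - k) {0..<a} {a..<2 * a}"
    by (rule bij_betw_byWitness[where f' = "\<lambda>k. 2 * a - 1 - k"]) auto
  have "bij_betw (\<lambda>e. 2 * a - 1 - (n - 1 - e) mod a) {n - (s + a)..<n - s} {a..<2 * a}"
    using bij_betw_trans[OF bij_betw_trans[OF reflect bij_betw_mod_window[OF assms(1)]] flip]
    by (simp add: comp_def)
  then have high: "bij_betw ?\<psi> {n - (s + a)..<n - s} {a..<2 * a}"
    by (rule bij_betw_cong[THEN iffD1, rotated]) (use assms in auto)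
  have "{0..<a} \<union> {a..<2 * a} = {0..<2 * a}"
    by auto
  then show ?thesis
    using bij_betw_combine[OF low high] by simp
qed

lemma block_exponent_mod:
  fixes a j :: nat
  assumes "0 < a"
  shows "(2 * j + 1 + (2 * a - 1 - j mod a)) mod (2 * a) = j mod a"
proof -
  have "j mod a < a"
    using assms by simp
  moreover have "(2 * a) * (j div a + 1) = 2 * (a * (j div a)) + 2 * a"
    by (simp add: algebra_simps)
  moreover have "j = a * (j div a) + j mod a"
    by simp
  ultimately have eq: "2 * j + 1 + (2 * a - 1 - j mod a) = j mod a + (2 * a) * (j div a + 1)"
    by linarith
  show ?thesis
    unfolding eq mod_mult_self2 using \<open>j mod a < a\<close> by simp
qed

lemma mirrors_reflection:
  assumes \<gamma>_2n: "\<And>z. z < n \<Longrightarrow> (\<gamma> ^^ (2 * n)) z = z" and "mirrors n \<gamma> f L"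
    and H: "\<And>e. e \<in> H \<Longrightarrow> e < n \<and> n - 1 - e \<in> L \<and> f e < n"
  shows "mirrors n \<gamma> f (L \<union> H)"
  unfolding mirrors_def
proof
  fix e assume "e \<in> L \<union> H"
  show "(\<gamma> ^^ (2 * e + 1)) (f (n - 1 - e)) = f e"
  proof (cases "e \<in> L")
    case False
    with \<open>e \<in> L \<union> H\<close> have e: "e < n" "n - 1 - e \<in> L" "f e < n"
      using H by auto
    moreover have "n - 1 - (n - 1 - e) = e"
      using e(1) by simp
    ultimately have "(\<gamma> ^^ (2 * (n - 1 - e) + 1)) (f e) = f (n - 1 - e)"
      using bspec[OF \<open>mirrors n \<gamma> f L\<close>[unfolded mirrors_def] e(2)] by simp
    moreover have "2 * e + 1 + (2 * (n - 1 - e) + 1) = 2 * n"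
      using e(1) by simp
    ultimately show ?thesis
      using \<gamma>_2n[OF e(3)] by (metis funpow_add o_apply)
  qed (use \<open>mirrors n \<gamma> f L\<close> in \<open>simp add: mirrors_def\<close>)
qed

lemma has_mirror_bij_Un:
  assumes "has_mirror_bij n \<gamma> D S" "has_mirror_bij n \<gamma> M R"
    and disjoint: "D \<inter> M = {}" "S \<inter> R = {}"
    and closed: "\<And>d. d \<in> D \<Longrightarrow> n - 1 - d \<in> D" "\<And>d. d \<in> M \<Longrightarrow> n - 1 - d \<in> M"
  shows "has_mirror_bij n \<gamma> (D \<union> M) (S \<union> R)"
proof -
  obtain g h where g: "bij_betw g D S" "mirrors n \<gamma> g D" and h: "bij_betw h M R" "mirrors n \<gamma> h M"
    using assms(1,2) unfolding has_mirror_bij_def by blast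
  let ?f = "\<lambda>d. if d \<in> M then h d else g d"
  have "bij_betw ?f D S"
    using g(1) by (rule bij_betw_cong[THEN iffD1, rotated]) (use disjoint(1) in auto)
  moreover have "bij_betw ?f M R"
    using h(1) by (rule bij_betw_cong[THEN iffD1, rotated]) auto
  ultimately have "bij_betw ?f (D \<union> M) (S \<union> R)"
    using disjoint(2) by (rule bij_betw_combine)
  moreover have "mirrors n \<gamma> ?f (D \<union> M)"
    unfolding mirrors_def
  proof
    fix d assume "d \<in> D \<union> M"
    then consider "d \<in> D" "d \<notin> M" "n - 1 - d \<notin> M" | "d \<in> M" "n - 1 - d \<in> M"
      using closed disjoint(1) by blast
    then show "(\<gamma> ^^ (2 * d + 1)) (?f (n - 1 - d)) = ?f d"
      using g(2) h(2) unfolding mirrors_def by cases simp_all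
  qed
  ultimately show ?thesis
    unfolding has_mirror_bij_def by blast
qed

lemma has_mirror_bij_even_orbit:
  assumes \<gamma>: "\<gamma> permutes {0..<n}" and \<gamma>_2n: "\<And>z. z < n \<Longrightarrow> (\<gamma> ^^ (2 * n)) z = z"
    and r: "r < n" and card: "card (orbit \<gamma> r) = 2 * a" and size: "2 * (s + a) \<le> n"
  shows "has_mirror_bij n \<gamma> ({s..<s + a} \<union> {n - (s + a)..<n - s}) (orbit \<gamma> r)"
proof -
  define h where "h j = (\<gamma> ^^ (if j < s + a then j mod a else 2 * a - 1 - (n - 1 - j) mod a)) r"
    for j
  have perm: "permutation \<gamma>"
    using \<gamma> permutation_permutes by blast
  have "0 < a"
    using card_orbit_pos[OF perm, of r] card by simp
  have bij: "bij_betw h ({s..<s + a} \<union> {n - (s + a)..<n - s}) (orbit \<gamma> r)"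
    using bij_betw_trans[OF bij_betw_block_exponent[OF \<open>0 < a\<close> size]
        bij_betw_funpow_orbit[OF perm, of r, unfolded card]]
    unfolding h_def by (simp add: comp_def)
  have "mirrors n \<gamma> h {s..<s + a}"
    unfolding mirrors_def
  proof
    fix j assume j: "j \<in> {s..<s + a}"
    have "h (n - 1 - j) = (\<gamma> ^^ (2 * a - 1 - j mod a)) r"
      using j size unfolding h_def by auto
    then have "(\<gamma> ^^ (2 * j + 1)) (h (n - 1 - j)) = (\<gamma> ^^ (2 * j + 1 + (2 * a - 1 - j mod a))) r"
      by (simp only: funpow_add o_apply)
    also have "\<dots> = (\<gamma> ^^ (j mod a)) r"
    proof (rule funpow_cong_mod)
      show "(\<gamma> ^^ (2 * a)) r = r"
        using funpow_eq_self_iff_card_orbit_dvd[OF perm] card by simp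
      have "j mod a < 2 * a"
        using mod_less_divisor[OF \<open>0 < a\<close>, of j] by linarith
      then show "(2 * j + 1 + (2 * a - 1 - j mod a)) mod (2 * a) = j mod a mod (2 * a)"
        by (simp only: block_exponent_mod[OF \<open>0 < a\<close>] mod_less)
    qed
    also have "\<dots> = h j"
      using j unfolding h_def by simp
    finally show "(\<gamma> ^^ (2 * j + 1)) (h (n - 1 - j)) = h j" .
  qed
  moreover have "h e < n" if "e \<in> {n - (s + a)..<n - s}" for e
    using that bij_betwE[OF bij] permutes_orbit_subset[OF \<gamma>] r by fastforce
  ultimately have "mirrors n \<gamma> h ({s..<s + a} \<union> {n - (s + a)..<n - s})"
    using size by (intro mirrors_reflection[OF \<gamma>_2n]) auto
  with bij show ?thesis
    unfolding has_mirror_bij_def by blast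
qed

text \<open>Position \<open>e\<close> carries \<open>\<gamma>\<^sup>e\<^sup>-\<^sup>m r\<close>; this works because \<open>\<gamma>\<^sup>n\<close> fixes \<open>r\<close>.\<close>

lemma has_mirror_bij_central_orbit:
  assumes \<gamma>: "\<gamma> permutes {0..<n}" and card: "card (orbit \<gamma> r) = n - 2 * m"
    and dvd: "card (orbit \<gamma> r) dvd n"
  shows "has_mirror_bij n \<gamma> {m..<n - m} (orbit \<gamma> r)"
proof -
  define h where "h e = (\<gamma> ^^ (e - m)) r" for e
  have perm: "permutation \<gamma>"
    using \<gamma> permutation_permutes by blast
  have "bij_betw (\<lambda>e. e - m) {m..<n - m} {0..<n - 2 * m}"
    by (rule bij_betw_byWitness[where f' = "\<lambda>k. k + m"]) auto
  then have "bij_betw h {m..<n - m} (orbit \<gamma> r)"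
    using bij_betw_trans[OF _ bij_betw_funpow_orbit[OF perm, of r, unfolded card]]
    unfolding h_def by (simp add: comp_def)
  moreover have "mirrors n \<gamma> h {m..<n - m}"
    unfolding mirrors_def
  proof
    fix e assume e: "e \<in> {m..<n - m}"
    have "(\<gamma> ^^ n) r = r"
      using funpow_eq_self_iff_card_orbit_dvd[OF perm] dvd by simp
    moreover have "2 * e + 1 + (n - 1 - e - m) = (e - m) + n"
      using e by auto
    ultimately show "(\<gamma> ^^ (2 * e + 1)) (h (n - 1 - e)) = h e"
      unfolding h_def by (metis funpow_add o_apply)
  qed
  ultimately show ?thesis
    unfolding has_mirror_bij_def by blast
qed

lemma has_mirror_bij_insert_even_orbit:
  assumes \<gamma>: "\<gamma> permutes {0..<n}" and \<gamma>_2n: "\<And>z. z < n \<Longrightarrow> (\<gamma> ^^ (2 * n)) z = z"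
    and r: "r < n" and card: "card (orbit \<gamma> r) = 2 * a" and size: "2 * (m + a) \<le> n"
    and S: "has_mirror_bij n \<gamma> ({0..<m} \<union> {n - m..<n}) S" "S \<inter> orbit \<gamma> r = {}"
  shows "has_mirror_bij n \<gamma> ({0..<m + a} \<union> {n - (m + a)..<n}) (S \<union> orbit \<gamma> r)"
proof -
  let ?D = "{0..<m} \<union> {n - m..<n}" and ?B = "{m..<m + a} \<union> {n - (m + a)..<n - m}"
  have "?D \<inter> ?B = {}" "\<And>d. d \<in> ?D \<Longrightarrow> n - 1 - d \<in> ?D" "\<And>d. d \<in> ?B \<Longrightarrow> n - 1 - d \<in> ?B"
    using size by auto
  then have "has_mirror_bij n \<gamma> (?D \<union> ?B) (S \<union> orbit \<gamma> r)"
    using has_mirror_bij_Un[OF S(1) has_mirror_bij_even_orbit[OF \<gamma> \<gamma>_2n r card size] _ S(2)]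
    by blast
  moreover have "?D \<union> ?B = {0..<m + a} \<union> {n - (m + a)..<n}"
    using size by auto
  ultimately show ?thesis
    by simp
qed

lemma has_mirror_bij_even_orbits:
  assumes \<gamma>: "\<gamma> permutes {0..<n}" and \<gamma>_2n: "\<And>z. z < n \<Longrightarrow> (\<gamma> ^^ (2 * n)) z = z"
    and "S \<subseteq> {0..<n}" "\<And>z. z \<in> S \<Longrightarrow> orbit \<gamma> z \<subseteq> S"
    and "\<And>z. z \<in> S \<Longrightarrow> even (card (orbit \<gamma> z))"
  shows "\<exists>m. card S = 2 * m \<and> has_mirror_bij n \<gamma> ({0..<m} \<union> {n - m..<n}) S"
  using assms(3-5)
proof (induction "card S" arbitrary: S rule: less_induct)
  case less
  show ?case
  proof (cases "S = {}")
    case True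
    then show ?thesis
      unfolding has_mirror_bij_def mirrors_def by (intro exI[of _ 0]) (simp add: bij_betw_def)
  next
    case False
    then obtain r where "r \<in> S"
      by blast
    with less.prems(1) have r: "r \<in> S" "r < n"
      by auto
    let ?C = "orbit \<gamma> r"
    obtain a where card_C: "card ?C = 2 * a"
      using less.prems(3)[OF r(1)] by (rule evenE)
    have fin: "finite S"
      using less.prems(1) finite_subset by blast
    have C: "?C \<subseteq> S" "?C \<noteq> {}"
      using less.prems(2)[OF r(1)] orbit_nonempty[of \<gamma> r] by simp_all
    have fin_C: "finite ?C"
      using finite_subset[OF C(1) fin] .
    have card_S: "card S = card (S - ?C) + card ?C"
      using C(1) fin fin_C by (simp add: card_Diff_subset card_mono)
    moreover have "0 < card ?C"
      using C(2) fin_C by (simp add: card_gt_0_iff)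
    ultimately have "card (S - ?C) < card S"
      by simp
    moreover have "S - ?C \<subseteq> {0..<n}" "\<And>z. z \<in> S - ?C \<Longrightarrow> orbit \<gamma> z \<subseteq> S - ?C"
      "\<And>z. z \<in> S - ?C \<Longrightarrow> even (card (orbit \<gamma> z))"
      using less.prems orbit_subset_Diff_orbit[OF \<gamma>] by auto
    ultimately obtain m where m: "card (S - ?C) = 2 * m"
      "has_mirror_bij n \<gamma> ({0..<m} \<union> {n - m..<n}) (S - ?C)"
      using less.hyps by blast
    have "2 * (m + a) \<le> n"
      using card_S(1) m(1) card_C card_mono[OF _ less.prems(1)] by fastforce
    then have "has_mirror_bij n \<gamma> ({0..<m + a} \<union> {n - (m + a)..<n}) (S - ?C \<union> ?C)"
      using has_mirror_bij_insert_even_orbit[OF \<gamma> \<gamma>_2n r(2) card_C _ m(2)] by blast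
    moreover have "S - ?C \<union> ?C = S"
      using C by auto
    ultimately show ?thesis
      using card_S(1) m(1) card_C by (intro exI[of _ "m + a"]) simp
  qed
qed

lemma has_mirror_bij_odd_orbits:
  assumes \<gamma>: "\<gamma> permutes {0..<n}" and dvd: "\<And>z. z < n \<Longrightarrow> card (orbit \<gamma> z) dvd 2 * n"
    and unique: "\<And>y z. y < n \<Longrightarrow> z < n \<Longrightarrow> odd (card (orbit \<gamma> y)) \<Longrightarrow>
      odd (card (orbit \<gamma> z)) \<Longrightarrow> orbit \<gamma> y = orbit \<gamma> z"
    and size: "2 * m + card {z \<in> {0..<n}. odd (card (orbit \<gamma> z))} = n"
  shows "has_mirror_bij n \<gamma> {m..<n - m} {z \<in> {0..<n}. odd (card (orbit \<gamma> z))}"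
proof (cases "\<exists>r<n. odd (card (orbit \<gamma> r))")
  case False
  then have none: "{z \<in> {0..<n}. odd (card (orbit \<gamma> z))} = {}"
    by auto
  moreover have empty: "{m..<n - m} = {}"
    using size unfolding none by simp
  ultimately have "bij_betw id {m..<n - m} {z \<in> {0..<n}. odd (card (orbit \<gamma> z))}"
    by (simp only: bij_betw_id)
  moreover have "mirrors n \<gamma> id {m..<n - m}"
    unfolding empty mirrors_def by simp
  ultimately show ?thesis
    unfolding has_mirror_bij_def by blast
next
  case True
  then obtain r where r: "r < n" "odd (card (orbit \<gamma> r))"
    by blast
  have perm: "permutation \<gamma>"
    using \<gamma> permutation_permutes by blast
  have odd_orbits: "{z \<in> {0..<n}. odd (card (orbit \<gamma> z))} = orbit \<gamma> r"
  proof
    show "{z \<in> {0..<n}. odd (card (orbit \<gamma> z))} \<subseteq> orbit \<gamma> r"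
      using unique r permutation_self_in_orbit[OF perm] by auto
    show "orbit \<gamma> r \<subseteq> {z \<in> {0..<n}. odd (card (orbit \<gamma> z))}"
      using orbit_subset_orbit_Collect[OF \<gamma> r(1), of "\<lambda>C. odd (card C)"] r(2) by simp
  qed
  have "coprime (card (orbit \<gamma> r)) 2"
    using r(2) by simp
  then have "card (orbit \<gamma> r) dvd n"
    using dvd[OF r(1)] coprime_dvd_mult_right_iff by blast
  moreover have "card (orbit \<gamma> r) = n - 2 * m"
    using size odd_orbits by simp
  ultimately show ?thesis
    using has_mirror_bij_central_orbit[OF \<gamma>] odd_orbits by simp
qed

lemma has_mirror_bij_if_cycle_conditions:
  assumes \<gamma>: "\<gamma> permutes {0..<n}" and dvd: "\<And>z. z < n \<Longrightarrow> card (orbit \<gamma> z) dvd 2 * n"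
    and unique: "\<And>y z. y < n \<Longrightarrow> z < n \<Longrightarrow> odd (card (orbit \<gamma> y)) \<Longrightarrow>
      odd (card (orbit \<gamma> z)) \<Longrightarrow> orbit \<gamma> y = orbit \<gamma> z"
  shows "has_mirror_bij n \<gamma> {0..<n} {0..<n}"
proof -
  let ?S = "{z \<in> {0..<n}. even (card (orbit \<gamma> z))}"
  let ?R = "{z \<in> {0..<n}. odd (card (orbit \<gamma> z))}"
  have perm: "permutation \<gamma>"
    using \<gamma> permutation_permutes by blast
  have \<gamma>_2n: "(\<gamma> ^^ (2 * n)) z = z" if "z < n" for z
    using funpow_eq_self_iff_card_orbit_dvd[OF perm] dvd[OF that] by blast
  have "orbit \<gamma> z \<subseteq> ?S" if "z \<in> ?S" for z
    using orbit_subset_orbit_Collect[OF \<gamma>, of z "\<lambda>C. even (card C)"] that by simp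
  then have "\<exists>m. card ?S = 2 * m \<and> has_mirror_bij n \<gamma> ({0..<m} \<union> {n - m..<n}) ?S"
    by (intro has_mirror_bij_even_orbits[OF \<gamma> \<gamma>_2n]) auto
  then obtain m where m: "card ?S = 2 * m" "has_mirror_bij n \<gamma> ({0..<m} \<union> {n - m..<n}) ?S"
    by blast
  have "card ?S + card ?R = card (?S \<union> ?R)"
    by (rule card_Un_disjoint[symmetric]) auto
  also have "?S \<union> ?R = {0..<n}"
    by auto
  finally have size: "2 * m + card ?R = n"
    using m(1) by simp
  have "({0..<m} \<union> {n - m..<n}) \<inter> {m..<n - m} = {}" "?S \<inter> ?R = {}"
    "\<And>d. d \<in> {0..<m} \<union> {n - m..<n} \<Longrightarrow> n - 1 - d \<in> {0..<m} \<union> {n - m..<n}"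
    "\<And>d. d \<in> {m..<n - m} \<Longrightarrow> n - 1 - d \<in> {m..<n - m}"
    using size by auto
  then have "has_mirror_bij n \<gamma> ({0..<m} \<union> {n - m..<n} \<union> {m..<n - m}) (?S \<union> ?R)"
    using has_mirror_bij_Un[OF m(2) has_mirror_bij_odd_orbits[OF \<gamma> dvd unique size]] by blast
  moreover have "{0..<m} \<union> {n - m..<n} \<union> {m..<n - m} = {0..<n}"
    using size by auto
  ultimately show ?thesis
    using \<open>?S \<union> ?R = {0..<n}\<close> by simp
qed

lemma orbit_mirror_eq:
  assumes \<gamma>: "\<gamma> permutes {0..<n}" and mirror: "mirrors n \<gamma> f {0..<n}" and "d < n"
  shows "orbit \<gamma> (f d) = orbit \<gamma> (f (n - 1 - d))"
proof -
  have "f d = (\<gamma> ^^ (2 * d + 1)) (f (n - 1 - d))"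
    using mirror assms(3) unfolding mirrors_def by simp
  also have "\<dots> \<in> orbit \<gamma> (f (n - 1 - d))"
    using \<gamma> permutation_permutes by (blast intro: funpow_in_orbit permutation_self_in_orbit)
  finally show ?thesis
    by (rule orbit_eq_if_mem[OF \<gamma> finite_atLeastLessThan])
qed

text \<open>The positions carrying a cycle of \<open>\<gamma>\<close> are closed under the involution
\<open>d \<mapsto> n - 1 - d\<close>, whose only possible fixed point is the central position.\<close>

lemma odd_orbit_eq_central:
  assumes \<gamma>: "\<gamma> permutes {0..<n}" and f: "bij_betw f {0..<n} {0..<n}"
    and mirror: "mirrors n \<gamma> f {0..<n}" and z: "z < n" "odd (card (orbit \<gamma> z))"
  shows "orbit \<gamma> z = orbit \<gamma> (f ((n - 1) div 2))"
proof -
  define A where "A = {d \<in> {0..<n}. f d \<in> orbit \<gamma> z}"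
  have "orbit \<gamma> z \<subseteq> {0..<n}"
    using permutes_orbit_subset[OF \<gamma>] z(1) by simp
  have "f ` A = orbit \<gamma> z"
  proof
    show "f ` A \<subseteq> orbit \<gamma> z"
      unfolding A_def by auto
    show "orbit \<gamma> z \<subseteq> f ` A"
    proof
      fix w assume w: "w \<in> orbit \<gamma> z"
      then have "w \<in> f ` {0..<n}"
        using bij_betw_imp_surj_on[OF f] \<open>orbit \<gamma> z \<subseteq> {0..<n}\<close> by auto
      with w show "w \<in> f ` A"
        unfolding A_def by auto
    qed
  qed
  moreover have "inj_on f A"
    using bij_betw_imp_inj_on[OF f] unfolding A_def by (rule inj_on_subset) auto
  ultimately have "odd (card A)"
    using z(2) card_image by fastforce
  moreover have "n - 1 - d \<in> A" if "d \<in> A" for d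
  proof -
    have "orbit \<gamma> (f (n - 1 - d)) = orbit \<gamma> z"
      using that orbit_mirror_eq[OF \<gamma> mirror] orbit_eq_if_mem[OF \<gamma>] unfolding A_def by force
    then show ?thesis
      using that permutation_self_in_orbit \<gamma> permutation_permutes unfolding A_def by fastforce
  qed
  moreover have "finite A"
    unfolding A_def by simp
  ultimately obtain d where "d \<in> A" "n - 1 - d = d"
    using odd_card_involution_has_fixpoint[of A "\<lambda>d. n - 1 - d"] unfolding A_def by auto
  then have "d = (n - 1) div 2" "f d \<in> orbit \<gamma> z"
    unfolding A_def by auto
  then show ?thesis
    using orbit_eq_if_mem[OF \<gamma>] by auto
qed

lemma card_odd_orbits_le_1_iff:
  fixes n :: nat and \<gamma> :: "nat \<Rightarrow> nat"
  shows "card {orbit \<gamma> z | z. z \<in> {0..<n} \<and> odd (card (orbit \<gamma> z))} \<le> 1 \<longleftrightarrow>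
    (\<forall>y<n. \<forall>z<n. odd (card (orbit \<gamma> y)) \<longrightarrow> odd (card (orbit \<gamma> z)) \<longrightarrow> orbit \<gamma> y = orbit \<gamma> z)"
proof -
  let ?Z = "{z \<in> {0..<n}. odd (card (orbit \<gamma> z))}"
  have odd_orbits: "{orbit \<gamma> z | z. z \<in> {0..<n} \<and> odd (card (orbit \<gamma> z))} = orbit \<gamma> ` ?Z"
    by auto
  have "finite (orbit \<gamma> ` ?Z)"
    by simp
  then have "card (orbit \<gamma> ` ?Z) \<le> 1 \<longleftrightarrow> (\<forall>a\<in>orbit \<gamma> ` ?Z. \<forall>b\<in>orbit \<gamma> ` ?Z. a = b)"
    unfolding One_nat_def by (rule card_le_Suc0_iff_eq)
  also have "\<dots> \<longleftrightarrow>
      (\<forall>y<n. \<forall>z<n. odd (card (orbit \<gamma> y)) \<longrightarrow> odd (card (orbit \<gamma> z)) \<longrightarrow> orbit \<gamma> y = orbit \<gamma> z)"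
    by auto
  finally show ?thesis
    unfolding odd_orbits .
qed

lemma has_mirror_bij_iff_cycle_conditions:
  assumes \<gamma>: "\<gamma> permutes {0..<n}"
  shows "(\<forall>z<n. (\<gamma> ^^ (2 * n)) z = z) \<and> has_mirror_bij n \<gamma> {0..<n} {0..<n} \<longleftrightarrow>
    (\<forall>z\<in>{0..<n}. card (orbit \<gamma> z) dvd 2 * n) \<and>
    card {orbit \<gamma> z | z. z \<in> {0..<n} \<and> odd (card (orbit \<gamma> z))} \<le> 1"
proof -
  have perm: "permutation \<gamma>"
    using \<gamma> permutation_permutes by blast
  have dvd_iff: "(\<forall>z<n. (\<gamma> ^^ (2 * n)) z = z) \<longleftrightarrow> (\<forall>z\<in>{0..<n}. card (orbit \<gamma> z) dvd 2 * n)"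
    using funpow_eq_self_iff_card_orbit_dvd[OF perm] by (simp add: Ball_def)
  have unique_if_has_mirror_bij:
    "\<forall>y<n. \<forall>z<n. odd (card (orbit \<gamma> y)) \<longrightarrow> odd (card (orbit \<gamma> z)) \<longrightarrow> orbit \<gamma> y = orbit \<gamma> z"
    if "has_mirror_bij n \<gamma> {0..<n} {0..<n}"
    using that odd_orbit_eq_central[OF \<gamma>] unfolding has_mirror_bij_def by metis
  show ?thesis
    unfolding card_odd_orbits_le_1_iff dvd_iff[symmetric]
  proof (intro iffI conjI; elim conjE)
    assume "\<forall>z<n. (\<gamma> ^^ (2 * n)) z = z" and "has_mirror_bij n \<gamma> {0..<n} {0..<n}"
    then show "\<forall>y<n. \<forall>z<n. odd (card (orbit \<gamma> y)) \<longrightarrow> odd (card (orbit \<gamma> z)) \<longrightarrow>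
        orbit \<gamma> y = orbit \<gamma> z"
      using unique_if_has_mirror_bij by blast
  next
    assume "\<forall>z<n. (\<gamma> ^^ (2 * n)) z = z"
      and "\<forall>y<n. \<forall>z<n. odd (card (orbit \<gamma> y)) \<longrightarrow> odd (card (orbit \<gamma> z)) \<longrightarrow>
        orbit \<gamma> y = orbit \<gamma> z"
    then show "has_mirror_bij n \<gamma> {0..<n} {0..<n}"
      using has_mirror_bij_if_cycle_conditions[OF \<gamma>] dvd_iff by simp
  qed
qed

theorem theorem4p8:
  fixes n :: nat and \<beta> \<gamma> :: "nat \<Rightarrow> nat"
  assumes "\<beta> permutes {0..<n}" and "\<gamma> permutes {0..<n}"
    and "cyclic_on \<beta> {0..<n}"
  shows "in_Par12 n id \<beta> \<gamma> \<longleftrightarrow>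
           (\<forall>z\<in>{0..<n}. card (orbit \<gamma> z) dvd 2 * n) \<and>
           card {orbit \<gamma> z | z. z \<in> {0..<n} \<and> odd (card (orbit \<gamma> z))} \<le> 1"
proof -
  interpret n_cycle n \<beta>
    using assms(1,3) by unfold_locales
  show ?thesis
    unfolding in_Par12_iff_mirror_bij[OF assms(2)] by (rule has_mirror_bij_iff_cycle_conditions[OF assms(2)])
qed

end
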